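(* For every $\Delta \ge 1$ there is a local algorithm, using only a port numbering (no unique identifiers), that on every weakly $2$-coloured graph $\mathcal{G}=(V,E)$ without isolated nodes and of maximum degree at most $\Delta$ computes a spanning forest of $\mathcal{G}$ in which every component is a star with at least two nodes (i.e. a rooted tree of depth exactly $1$: a root with at least one child, all children being leaves), with each node knowing whether it is a root or a leaf and, for leaves, the port leading to its root.
   Context: Model: a graph $\mathcal{G}=(V,E)$ without isolated nodes is a distributed system; every node runs the same deterministic algorithm. Communication is synchronous: in each round every node receives messages from its neighbours, performs local computation, and sends messages to its neighbours. Each node knows its degree, its own input label (e.g. its colour), and the global degree bound $\Delta$. A local algorithm is one that terminates after $T$ rounds, where $T$ may depend on $\Delta$ but not on the number of nodes. A port numbering means each node has a fixed ordering (numbering $1,\dots,\deg(v)$) of its incident edges, known to it; nodes have no identifiers. A weak $2$-colouring assigns each node black or white so that every non-isolated node has at least one neighbour of the opposite colour; it is given as input. *)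

theory Defs
  imports Main
begin

definition nbrs :: "(nat \<Rightarrow> nat \<Rightarrow> bool) \<Rightarrow> nat \<Rightarrow> nat set" where
  "nbrs E v = {u. E v u}"

definition deg :: "(nat \<Rightarrow> nat \<Rightarrow> bool) \<Rightarrow> nat \<Rightarrow> nat" where
  "deg E v = card (nbrs E v)"

definition simple_graph :: "nat set \<Rightarrow> (nat \<Rightarrow> nat \<Rightarrow> bool) \<Rightarrow> bool" where
  "simple_graph V E \<longleftrightarrow> (\<forall>u v. E u v \<longrightarrow> u \<in> V \<and> v \<in> V \<and> E v u \<and> u \<noteq> v)"

definition no_isolated :: "nat set \<Rightarrow> (nat \<Rightarrow> nat \<Rightarrow> bool) \<Rightarrow> bool" where
  "no_isolated V E \<longleftrightarrow> (\<forall>v\<in>V. \<exists>u. E v u)"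

definition max_deg_le :: "nat set \<Rightarrow> (nat \<Rightarrow> nat \<Rightarrow> bool) \<Rightarrow> nat \<Rightarrow> bool" where
  "max_deg_le V E \<Delta> \<longleftrightarrow> (\<forall>v\<in>V. deg E v \<le> \<Delta>)"

definition port_numbering :: "nat set \<Rightarrow> (nat \<Rightarrow> nat \<Rightarrow> bool) \<Rightarrow> (nat \<Rightarrow> nat \<Rightarrow> nat) \<Rightarrow> bool" where
  "port_numbering V E p \<longleftrightarrow> (\<forall>v\<in>V. bij_betw (p v) {1..deg E v} (nbrs E v))"

definition inport :: "(nat \<Rightarrow> nat \<Rightarrow> bool) \<Rightarrow> (nat \<Rightarrow> nat \<Rightarrow> nat) \<Rightarrow> nat \<Rightarrow> nat \<Rightarrow> nat" where
  "inport E p u v = (THE j. j \<in> {1..deg E u} \<and> p u j = v)"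

text \<open>Weak 2-colouring (True = black, False = white).\<close>
definition weak_2_colouring :: "nat set \<Rightarrow> (nat \<Rightarrow> nat \<Rightarrow> bool) \<Rightarrow> (nat \<Rightarrow> bool) \<Rightarrow> bool" where
  "weak_2_colouring V E c \<longleftrightarrow> (\<forall>v\<in>V. \<exists>u. E v u \<and> c u \<noteq> c v)"

text \<open>Local output of a node: it is a root, or a leaf whose root is behind the given port.\<close>
datatype star_out = Root | Leaf nat

text \<open>A deterministic port-numbering algorithm (states and messages encoded as naturals).
  init: initial state from (degree, input colour);
  send: message sent from a state on a given port;
  step: new state from old state and received messages, indexed by port
        (None for non-existent ports);
  out: local output read off the final state.\<close>
record pn_alg =
  init :: "nat \<Rightarrow> bool \<Rightarrow> nat"
  send :: "nat \<Rightarrow> nat \<Rightarrow> nat"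
  step :: "nat \<Rightarrow> (nat \<Rightarrow> nat option) \<Rightarrow> nat"
  out :: "nat \<Rightarrow> star_out"

primrec run :: "pn_alg \<Rightarrow> (nat \<Rightarrow> nat \<Rightarrow> bool) \<Rightarrow> (nat \<Rightarrow> nat \<Rightarrow> nat) \<Rightarrow> (nat \<Rightarrow> bool)
    \<Rightarrow> nat \<Rightarrow> nat \<Rightarrow> nat" where
  "run A E p c 0 v = init A (deg E v) (c v)"
| "run A E p c (Suc t) v =
     step A (run A E p c t v)
       (\<lambda>i. if i \<in> {1..deg E v}
            then Some (send A (run A E p c t (p v i)) (inport E p (p v i) v))
            else None)"

definition star_forest_output :: "nat set \<Rightarrow> (nat \<Rightarrow> nat \<Rightarrow> bool) \<Rightarrow> (nat \<Rightarrow> nat \<Rightarrow> nat)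
    \<Rightarrow> (nat \<Rightarrow> star_out) \<Rightarrow> bool" where
  "star_forest_output V E p r \<longleftrightarrow>
     (\<forall>v\<in>V. case r v of
        Root \<Rightarrow> (\<exists>u\<in>V. \<exists>i. r u = Leaf i \<and> i \<in> {1..deg E u} \<and> p u i = v)
      | Leaf i \<Rightarrow> i \<in> {1..deg E v} \<and> r (p v i) = Root)"

end

theory Submission
  imports Defs "HOL-Library.Nat_Bijection"
begin

(* Call a node black if its colour is True and white otherwise.  Every node v fixes a
   partner: the neighbour behind its least port of opposite colour.
   - Every white node proposes to its partner; a black node with a proposal is
     proposed.
   - Every black node that is not proposed claims its (white) partner.
   - A claimed white node becomes a root (its claimants are its leaves); an unclaimed
     white node is a leaf of its partner.  A proposed black node becomes a root if some
     proposer is still unclaimed; otherwise it joins one of its (claimed) proposers as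
     a leaf.  An unproposed black node is a leaf of the white node it claimed.  The running time is four rounds for
   every graph. *)

section \<open>Graphs with a port numbering\<close>

locale port_graph =
  fixes V :: "nat set" and E :: "nat \<Rightarrow> nat \<Rightarrow> bool" and p :: "nat \<Rightarrow> nat \<Rightarrow> nat"
  assumes simple: "simple_graph V E"
    and ports: "port_numbering V E p"
begin

abbreviation port_set :: "nat \<Rightarrow> nat set" where
  "port_set v \<equiv> {1..deg E v}"

lemma neighbour_iff_port:
  assumes "v \<in> V"
  shows "E v u \<longleftrightarrow> (\<exists>i\<in>port_set v. p v i = u)"
proof -
  have "p v ` port_set v = nbrs E v"
    using ports assms unfolding port_numbering_def bij_betw_def by blast
  then have "E v u \<longleftrightarrow> u \<in> p v ` port_set v" by (simp add: nbrs_def)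
  then show ?thesis by blast
qed

lemma port_target:
  assumes "v \<in> V" and "i \<in> port_set v"
  shows "E v (p v i)" and "p v i \<in> V"
  using assms neighbour_iff_port simple unfolding simple_graph_def by blast+

lemma port_back:
  assumes "v \<in> V" and "E v u"
  shows "\<exists>j\<in>port_set u. p u j = v"
proof -
  have "u \<in> V" and "E u v" using assms simple unfolding simple_graph_def by blast+
  then show ?thesis using neighbour_iff_port by blast
qed

lemma inport_iff:
  assumes v: "v \<in> V" and i: "i \<in> port_set v" and j: "j \<in> port_set (p v i)"
  shows "inport E p (p v i) v = j \<longleftrightarrow> p (p v i) j = v"
proof -
  define u where "u = p v i"
  have u: "u \<in> V" "E v u" using port_target[OF v i] by (simp_all add: u_def)
  obtain k where k: "k \<in> port_set u" "p u k = v" using port_back[OF v u(2)] by blast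
  have inj: "inj_on (p u) (port_set u)"
    using ports u(1) unfolding port_numbering_def bij_betw_def by blast
  have "inport E p u v = k"
    unfolding inport_def
  proof (rule the_equality)
    fix k' assume "k' \<in> port_set u \<and> p u k' = v"
    then show "k' = k" using k inj by (auto dest: inj_onD)
  qed (use k in simp)
  moreover have "p u j = v \<longleftrightarrow> j = k"
    using j k inj inj_onD[of "p u" _ j k] u_def by metis
  ultimately show ?thesis using u_def by auto
qed

lemma star_forest_output_local:
  assumes "star_forest_output V E p r" and "\<And>v. v \<in> V \<Longrightarrow> r' v = r v"
  shows "star_forest_output V E p r'"
proof -
  have "\<And>v i. v \<in> V \<Longrightarrow> i \<in> port_set v \<Longrightarrow> r' (p v i) = r (p v i)"
    using assms(2) port_target(2) by blast
  then show ?thesis using assms unfolding star_forest_output_def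
    by (auto split: star_out.split)
qed

end

section \<open>The star forest determined by a choice of partners\<close>

text \<open>fp v is a port of v leading to a neighbour of opposite colour; any such choice
  yields a star forest.\<close>
locale star_construction = port_graph +
  fixes c :: "nat \<Rightarrow> bool" and fp :: "nat \<Rightarrow> nat"
  assumes partner_port: "v \<in> V \<Longrightarrow> fp v \<in> port_set v \<and> c (p v (fp v)) \<noteq> c v"
begin

definition partner :: "nat \<Rightarrow> nat" where
  "partner v = p v (fp v)"

definition proposed :: "nat \<Rightarrow> bool" where
  "proposed v \<longleftrightarrow> (\<exists>i\<in>port_set v. \<not> c (p v i) \<and> partner (p v i) = v)"

definition claimed :: "nat \<Rightarrow> bool" where
  "claimed v \<longleftrightarrow> (\<exists>i\<in>port_set v. c (p v i) \<and> \<not> proposed (p v i) \<and> partner (p v i) = v)"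

definition has_free_proposer :: "nat \<Rightarrow> bool" where
  "has_free_proposer v \<longleftrightarrow>
     (\<exists>i\<in>port_set v. \<not> c (p v i) \<and> partner (p v i) = v \<and> \<not> claimed (p v i))"

definition claimed_proposer_port :: "nat \<Rightarrow> nat" where
  "claimed_proposer_port v =
     (LEAST i. i \<in> port_set v \<and> \<not> c (p v i) \<and> partner (p v i) = v \<and> claimed (p v i))"

definition star_role :: "nat \<Rightarrow> star_out" where
  "star_role v =
     (if \<not> c v then (if claimed v then Root else Leaf (fp v))
      else if \<not> proposed v then Leaf (fp v)
      else if has_free_proposer v then Root
      else Leaf (claimed_proposer_port v))"

lemma partner_props:
  assumes "v \<in> V"
  shows "fp v \<in> port_set v" "partner v \<in> V" "E v (partner v)" "c (partner v) \<noteq> c v"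
  using partner_port[OF assms] port_target[OF assms] unfolding partner_def by auto

lemma partner_back:
  assumes "v \<in> V"
  obtains j where "j \<in> port_set (partner v)" "p (partner v) j = v"
  using port_back[OF assms partner_props(3)[OF assms]] by blast

text \<open>Every leaf points to a root: an unclaimed white node makes its partner a
  proposed black node with a free proposer, an unproposed black node claims its
  partner, and a claimed proposer is a root.\<close>
lemma leaf_points_to_root:
  assumes v: "v \<in> V" and leaf: "star_role v = Leaf i"
  shows "i \<in> port_set v \<and> star_role (p v i) = Root"
proof (cases "c v \<and> proposed v")
  case False
  then have i: "i = fp v" using leaf unfolding star_role_def by (auto split: if_splits)
  obtain j where j: "j \<in> port_set (partner v)" "p (partner v) j = v"
    using partner_back[OF v] .
  have "star_role (partner v) = Root"
  proof (cases "c v")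
    case True
    then have "claimed (partner v)"
      using False j partner_props[OF v] unfolding claimed_def by (intro bexI[of _ j]) auto
    then show ?thesis using True partner_props[OF v] unfolding star_role_def by simp
  next
    case white: False
    have "\<not> claimed v" using leaf white unfolding star_role_def by (auto split: if_splits)
    then have "proposed (partner v)" "has_free_proposer (partner v)"
      using white j partner_props[OF v] unfolding proposed_def has_free_proposer_def
      by (auto intro!: bexI[of _ j])
    then show ?thesis using white partner_props[OF v] unfolding star_role_def by simp
  qed
  then show ?thesis using i partner_props[OF v] unfolding partner_def by simp
next
  case True
  then have no_free: "\<not> has_free_proposer v" and i: "i = claimed_proposer_port v"
    using leaf unfolding star_role_def by (auto split: if_splits)
  obtain k where "k \<in> port_set v" "\<not> c (p v k)" "partner (p v k) = v"
    using True unfolding proposed_def by blast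
  with no_free have "\<exists>k. k \<in> port_set v \<and> \<not> c (p v k) \<and> partner (p v k) = v \<and> claimed (p v k)"
    unfolding has_free_proposer_def by blast
  then have "i \<in> port_set v \<and> \<not> c (p v i) \<and> claimed (p v i)"
    unfolding i claimed_proposer_port_def by (rule LeastI2_ex) blast
  then show ?thesis unfolding star_role_def by simp
qed

text \<open>Every root has a leaf: a claimed white node has an unproposed black claimant,
  and a black root has an unclaimed white proposer.\<close>
lemma root_has_leaf:
  assumes v: "v \<in> V" and root: "star_role v = Root"
  shows "\<exists>u\<in>V. \<exists>i. star_role u = Leaf i \<and> i \<in> port_set u \<and> p u i = v"
proof -
  obtain k where k: "k \<in> port_set v" "partner (p v k) = v"
      and leaf: "star_role (p v k) = Leaf (fp (p v k))"
  proof (cases "c v")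
    case True
    then obtain k where "k \<in> port_set v" "\<not> c (p v k)" "partner (p v k) = v" "\<not> claimed (p v k)"
      using root unfolding star_role_def has_free_proposer_def by (auto split: if_splits)
    then show ?thesis using that unfolding star_role_def by simp
  next
    case False
    then obtain k where "k \<in> port_set v" "c (p v k)" "\<not> proposed (p v k)" "partner (p v k) = v"
      using root unfolding star_role_def claimed_def by (auto split: if_splits)
    then show ?thesis using that unfolding star_role_def by simp
  qed
  have "p v k \<in> V" using port_target[OF v k(1)] by simp
  then show ?thesis
    using k leaf partner_props(1) unfolding partner_def by blast
qed

theorem star_role_correct: "star_forest_output V E p star_role"
  unfolding star_forest_output_def
  using leaf_points_to_root root_has_leaf by (auto split: star_out.split)

end

section \<open>The distributed algorithm\<close>

text \<open>A state is the encoding of the list [round, colour, partner port, proposed,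
  claimed, has free proposer, claimed proposer port] of what the node has learned.\<close>
definition node_state :: "nat \<Rightarrow> bool \<Rightarrow> nat \<Rightarrow> bool \<Rightarrow> bool \<Rightarrow> bool \<Rightarrow> nat \<Rightarrow> nat" where
  "node_state r col fport prop claim free cport =
     list_encode [r, of_bool col, fport, of_bool prop, of_bool claim, of_bool free, cport]"

text \<open>Round 1 broadcasts colours; round 2 carries white proposals; round 3 carries the
  claims of unproposed black nodes; in round 4 each white node tells its partner whether
  it was claimed (message 2) or not (message 1).\<close>
definition star_algorithm :: pn_alg where
  "star_algorithm = \<lparr>
     init = (\<lambda>d col. node_state 0 col 0 False False False 0),
     send = (\<lambda>s j. let xs = list_decode s in
       if xs!0 = 0 then xs!1
       else if xs!0 = 1 then of_bool (xs!1 = 0 \<and> j = xs!2)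
       else if xs!0 = 2 then of_bool (xs!1 = 1 \<and> xs!3 = 0 \<and> j = xs!2)
       else if xs!1 = 0 \<and> j = xs!2 then (if xs!4 = 1 then 2 else 1) else 0),
     step = (\<lambda>s m. let xs = list_decode s in
       if xs!0 = 0 then list_encode [1, xs!1, LEAST i. m i = Some (1 - xs!1), 0, 0, 0, 0]
       else if xs!0 = 1 then list_encode [2, xs!1, xs!2, of_bool (\<exists>i. m i = Some 1), 0, 0, 0]
       else if xs!0 = 2 then list_encode [3, xs!1, xs!2, xs!3, of_bool (\<exists>i. m i = Some 1), 0, 0]
       else list_encode [4, xs!1, xs!2, xs!3, xs!4, of_bool (\<exists>i. m i = Some 1),
                         LEAST i. m i = Some 2]),
     out = (\<lambda>s. let xs = list_decode s in
       if xs!1 = 0 then (if xs!4 = 1 then Root else Leaf (xs!2))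
       else if xs!3 = 0 then Leaf (xs!2)
       else if xs!5 = 1 then Root else Leaf (xs!6)) \<rparr>"

lemma star_algorithm_init:
  "init star_algorithm d col = node_state 0 col 0 False False False 0"
  by (simp add: star_algorithm_def)

lemma star_algorithm_send:
  "send star_algorithm (node_state 0 col f x y z w) j = of_bool col"
  "send star_algorithm (node_state 1 col f x y z w) j = (if \<not> col \<and> j = f then 1 else 0)"
  "send star_algorithm (node_state 2 col f x y z w) j = (if (col \<and> \<not> x) \<and> j = f then 1 else 0)"
  "send star_algorithm (node_state 3 col f x y z w) j =
     (if \<not> col \<and> j = f then (if y then 2 else 1) else 0)"
  by (simp_all add: star_algorithm_def node_state_def)

lemma star_algorithm_step:
  "step star_algorithm (node_state 0 col f x y z w) m =
     node_state 1 col (LEAST i. m i = Some (1 - of_bool col)) False False False 0"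
  "step star_algorithm (node_state 1 col f x y z w) m =
     node_state 2 col f (\<exists>i. m i = Some 1) False False 0"
  "step star_algorithm (node_state 2 col f x y z w) m =
     node_state 3 col f x (\<exists>i. m i = Some 1) False 0"
  "step star_algorithm (node_state 3 col f x y z w) m =
     node_state 4 col f x y (\<exists>i. m i = Some 1) (LEAST i. m i = Some 2)"
  by (simp_all add: star_algorithm_def node_state_def)

lemma star_algorithm_out:
  "out star_algorithm (node_state 4 col f x y z w) =
     (if \<not> col then (if y then Root else Leaf f)
      else if \<not> x then Leaf f else if z then Root else Leaf w)"
  by (simp add: star_algorithm_def node_state_def)

text \<open>Reading the inbox of a round in which nonzero messages travel along partner ports.\<close>
lemma partner_message_eq_Some:
  "k \<noteq> 0 \<Longrightarrow> ((if Q then Some (if R then x else 0) else None) = Some k) \<longleftrightarrow> Q \<and> R \<and> x = k"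
  by auto

lemma (in port_graph) run_Suc_from:
  assumes "\<And>u. u \<in> V \<Longrightarrow> run A E p c t u = S u" and v: "v \<in> V"
  shows "run A E p c (Suc t) v =
    step A (S v) (\<lambda>i. if i \<in> port_set v
                      then Some (send A (S (p v i)) (inport E p (p v i) v)) else None)"
  using assms port_target(2)[OF v] by (simp cong: if_cong)

context star_construction
begin

lemma message_to_partner:
  assumes v: "v \<in> V" and i: "i \<in> port_set v"
  shows "inport E p (p v i) v = fp (p v i) \<longleftrightarrow> partner (p v i) = v"
  using inport_iff[OF v i] partner_props(1)[OF port_target(2)[OF v i]]
  unfolding partner_def by blast

lemma run_Suc_partner_messages:
  assumes states: "\<And>u. u \<in> V \<Longrightarrow> run A E p c t u = S u"
    and sends: "\<And>u j. u \<in> V \<Longrightarrow> send A (S u) j = (if P u \<and> j = fp u then m u else 0)"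
    and v: "v \<in> V"
  shows "run A E p c (Suc t) v =
    step A (S v) (\<lambda>i. if i \<in> port_set v
                      then Some (if P (p v i) \<and> partner (p v i) = v then m (p v i) else 0)
                      else None)"
proof -
  have "\<And>i. i \<in> port_set v \<Longrightarrow> send A (S (p v i)) (inport E p (p v i) v) =
      (if P (p v i) \<and> partner (p v i) = v then m (p v i) else 0)"
    using sends port_target(2)[OF v] message_to_partner[OF v] by simp
  then show ?thesis using run_Suc_from[OF states v] by (simp cong: if_cong)
qed

end

definition least_opposite_port :: "(nat \<Rightarrow> nat \<Rightarrow> bool) \<Rightarrow> (nat \<Rightarrow> nat \<Rightarrow> nat)
    \<Rightarrow> (nat \<Rightarrow> bool) \<Rightarrow> nat \<Rightarrow> nat" where
  "least_opposite_port E p c v = (LEAST i. i \<in> {1..deg E v} \<and> c (p v i) \<noteq> c v)"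

locale weakly_coloured_graph = port_graph +
  fixes c :: "nat \<Rightarrow> bool"
  assumes weak: "weak_2_colouring V E c"
begin

lemma least_opposite_port:
  assumes v: "v \<in> V"
  shows "least_opposite_port E p c v \<in> port_set v \<and>
         c (p v (least_opposite_port E p c v)) \<noteq> c v"
proof -
  obtain u where u: "E v u" "c u \<noteq> c v" using weak v unfolding weak_2_colouring_def by blast
  have "\<exists>i\<in>port_set v. p v i = u" using neighbour_iff_port[OF v] u(1) by simp
  then obtain i where "i \<in> port_set v" "p v i = u" by blast
  with u have "i \<in> port_set v \<and> c (p v i) \<noteq> c v" by simp
  then show ?thesis unfolding least_opposite_port_def by (rule LeastI)
qed

sublocale star_construction V E p c "least_opposite_port E p c"
  by unfold_locales (rule least_opposite_port)

abbreviation fp :: "nat \<Rightarrow> nat" where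
  "fp \<equiv> least_opposite_port E p c"

abbreviation state :: "nat \<Rightarrow> nat \<Rightarrow> nat" where
  "state t v \<equiv> run star_algorithm E p c t v"

lemma round_1:
  assumes v: "v \<in> V"
  shows "state 1 v = node_state 1 (c v) (fp v) False False False 0"
proof -
  let ?inbox = "\<lambda>i. if i \<in> port_set v then Some (of_bool (c (p v i)) :: nat) else None"
  have "state (Suc 0) v = step star_algorithm (node_state 0 (c v) 0 False False False 0) ?inbox"
    using run_Suc_from[of star_algorithm c 0 "\<lambda>u. node_state 0 (c u) 0 False False False 0", OF _ v]
    by (simp add: star_algorithm_init star_algorithm_send cong: if_cong)
  moreover have "(LEAST i. ?inbox i = Some (1 - of_bool (c v))) = fp v"
    unfolding least_opposite_port_def by (rule arg_cong[where f = Least]) auto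
  ultimately show ?thesis by (simp only: star_algorithm_step One_nat_def)
qed

lemma round_2:
  assumes v: "v \<in> V"
  shows "state 2 v = node_state 2 (c v) (fp v) (proposed v) False False 0"
proof -
  let ?inbox = "\<lambda>i. if i \<in> port_set v
      then Some (if \<not> c (p v i) \<and> partner (p v i) = v then 1 else 0 :: nat) else None"
  have "state (Suc 1) v = step star_algorithm (node_state 1 (c v) (fp v) False False False 0) ?inbox"
    by (rule run_Suc_partner_messages[where S = "\<lambda>u. node_state 1 (c u) (fp u) False False False 0"
          and P = "\<lambda>u. \<not> c u" and m = "\<lambda>u. 1"])
      (simp_all only: round_1 star_algorithm_send v)
  moreover have "(\<exists>i. ?inbox i = Some 1) = proposed v"
    unfolding proposed_def by (auto simp: partner_message_eq_Some)
  ultimately have "state (Suc 1) v = node_state 2 (c v) (fp v) (proposed v) False False 0"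
    by (simp only: star_algorithm_step)
  then show ?thesis by (simp only: numeral_2_eq_2 One_nat_def)
qed

lemma round_3:
  assumes v: "v \<in> V"
  shows "state 3 v = node_state 3 (c v) (fp v) (proposed v) (claimed v) False 0"
proof -
  let ?inbox = "\<lambda>i. if i \<in> port_set v
      then Some (if (c (p v i) \<and> \<not> proposed (p v i)) \<and> partner (p v i) = v then 1 else 0 :: nat)
      else None"
  have "state (Suc 2) v =
      step star_algorithm (node_state 2 (c v) (fp v) (proposed v) False False 0) ?inbox"
    by (rule run_Suc_partner_messages[where
          S = "\<lambda>u. node_state 2 (c u) (fp u) (proposed u) False False 0"
          and P = "\<lambda>u. c u \<and> \<not> proposed u" and m = "\<lambda>u. 1"])
      (simp_all only: round_2 star_algorithm_send v)
  moreover have "(\<exists>i. ?inbox i = Some 1) = claimed v"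
    unfolding claimed_def by (auto simp: partner_message_eq_Some)
  ultimately have "state (Suc 2) v = node_state 3 (c v) (fp v) (proposed v) (claimed v) False 0"
    by (simp only: star_algorithm_step)
  then show ?thesis by (simp del: run.simps)
qed

lemma round_4:
  assumes v: "v \<in> V"
  shows "state 4 v = node_state 4 (c v) (fp v) (proposed v) (claimed v)
                       (has_free_proposer v) (claimed_proposer_port v)"
proof -
  let ?inbox = "\<lambda>i. if i \<in> port_set v
      then Some (if \<not> c (p v i) \<and> partner (p v i) = v
                 then (if claimed (p v i) then 2 else 1) else 0 :: nat)
      else None"
  have "state (Suc 3) v =
      step star_algorithm (node_state 3 (c v) (fp v) (proposed v) (claimed v) False 0) ?inbox"
    by (rule run_Suc_partner_messages[where
          S = "\<lambda>u. node_state 3 (c u) (fp u) (proposed u) (claimed u) False 0"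
          and P = "\<lambda>u. \<not> c u" and m = "\<lambda>u. if claimed u then 2 else 1"])
      (simp_all only: round_3 star_algorithm_send v)
  moreover have "(\<exists>i. ?inbox i = Some 1) = has_free_proposer v"
    unfolding has_free_proposer_def by (auto simp: partner_message_eq_Some)
  moreover have "(LEAST i. ?inbox i = Some 2) = claimed_proposer_port v"
    unfolding claimed_proposer_port_def
    by (rule arg_cong[where f = Least]) (auto simp: partner_message_eq_Some)
  ultimately have "state (Suc 3) v = node_state 4 (c v) (fp v) (proposed v) (claimed v)
                       (has_free_proposer v) (claimed_proposer_port v)"
    by (simp only: star_algorithm_step)
  then show ?thesis by (simp del: run.simps)
qed

lemma output_is_star_role:
  assumes "v \<in> V"
  shows "out star_algorithm (state 4 v) = star_role v"
  by (simp only: round_4[OF assms] star_algorithm_out star_role_def)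

end

theorem mainTheorem4:
  shows "\<forall>\<Delta>::nat. \<Delta> \<ge> 1 \<longrightarrow>
    (\<exists>(A::pn_alg) (T::nat). \<forall>V E p c.
       finite V \<and> simple_graph V E \<and> port_numbering V E p \<and> no_isolated V E \<and>
       max_deg_le V E \<Delta> \<and> weak_2_colouring V E c \<longrightarrow>
       star_forest_output V E p (\<lambda>v. out A (run A E p c T v)))"
proof (intro allI impI exI[of _ star_algorithm] exI[of _ 4])
  fix \<Delta> :: nat and V E p c
  assume "finite V \<and> simple_graph V E \<and> port_numbering V E p \<and> no_isolated V E \<and>
    max_deg_le V E \<Delta> \<and> weak_2_colouring V E c"
  then interpret weakly_coloured_graph V E p c
    by unfold_locales auto
  show "star_forest_output V E p (\<lambda>v. out star_algorithm (run star_algorithm E p c 4 v))"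
    by (rule star_forest_output_local[OF star_role_correct output_is_star_role])
qed

end
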